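(* Let $\alpha,\beta$ be parameters, $q$ an indeterminate, and $E_n(x;q)=\sum_{k=0}^nE_{n,k}(\alpha,\beta,q)x^k$ with $E_{n,k}$ as in the context. For $n\geq 1$, \[ E_{n}(1;q)=\prod_{i=0}^{n-1}[\alpha+\beta+i]. \]
   Context: For real $x$, $[x]=\frac{1-q^x}{1-q}$. The numbers $E_{n,k}(\alpha,\beta,q)$ are determined by $E_{0,0}=1$, $E_{n,k}=0$ if $k\notin\{0,\dots,n\}$, and for $n\ge1$: $E_{n,k}(\alpha,\beta,q)=q^{\beta+k-1}[n-k+\alpha]E_{n-1,k-1}(\alpha,\beta,q)+[k+\beta]E_{n-1,k}(\alpha,\beta,q)$. *)

theory Defs
  imports Complex_Main
begin

text \<open>q-number [x] = (1 - q^x)/(1 - q), real exponent via powr (q > 0).\<close>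
definition qnum :: "real \<Rightarrow> real \<Rightarrow> real" where
  "qnum q x = (1 - q powr x) / (1 - q)"

text \<open>E a b q n k = E_{n,k}(alpha,beta,q); zero for k > n (k is a nat, so k >= 0).\<close>
fun E :: "real \<Rightarrow> real \<Rightarrow> real \<Rightarrow> nat \<Rightarrow> nat \<Rightarrow> real" where
  "E a b q 0 k = (if k = 0 then 1 else 0)"
| "E a b q (Suc n) k =
     (if k > Suc n then 0 else
        (if k = 0 then 0
         else q powr (b + real k - 1) * qnum q (real (Suc n) - real k + a) * E a b q n (k - 1))
        + qnum q (real k + b) * E a b q n k)"

definition En :: "real \<Rightarrow> real \<Rightarrow> real \<Rightarrow> nat \<Rightarrow> real \<Rightarrow> real" where
  "En a b q n x = (\<Sum>k = 0..n. E a b q n k * x ^ k)"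

end

theory Submission
  imports Defs
begin

text \<open>At \<open>x = 1\<close> each \<open>E\<^bsub>n,j\<^esub>\<close> feeds the next row twice: with weight \<open>[j+\<beta>]\<close> into
  \<open>E\<^bsub>n+1,j\<^esub>\<close> and with weight \<open>q\<^bsup>j+\<beta>\<^esup>[n-j+\<alpha>]\<close> into \<open>E\<^bsub>n+1,j+1\<^esub>\<close>. By the addition rule
  \<open>[x+y] = [x] + q\<^sup>x[y]\<close> these weights sum to \<open>[\<alpha>+\<beta>+n]\<close>, independently of \<open>j\<close>, so each
  row sum is \<open>[\<alpha>+\<beta>+n]\<close> times the previous one.\<close>

lemma qnum_add:
  assumes "q \<noteq> 1"
  shows "qnum q (x + y) = qnum q x + q powr x * qnum q y"
  using assms by (simp add: qnum_def powr_add field_simps)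

lemma E_eq_0: "n < k \<Longrightarrow> E a b q n k = 0"
  by (induction n arbitrary: k) auto

lemma E_row_sum_Suc:
  assumes "q \<noteq> 1"
  shows "(\<Sum>k = 0..Suc n. E a b q (Suc n) k) = qnum q (a + b + real n) * (\<Sum>k = 0..n. E a b q n k)"
proof -
  let ?step = "\<lambda>k. q powr (b + real k - 1) * qnum q (real (Suc n) - real k + a) * E a b q n (k - 1)"
  let ?up = "\<lambda>j. q powr (b + real j) * qnum q (real n - real j + a) * E a b q n j"
  let ?stay = "\<lambda>j. qnum q (real j + b) * E a b q n j"
  have weights: "q powr (b + real j) * qnum q (real n - real j + a) + qnum q (real j + b)
      = qnum q (a + b + real n)" for j
    using qnum_add[OF assms, of "real j + b" "real n - real j + a"] by (simp add: add_ac)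
  have "(\<Sum>k = 0..Suc n. E a b q (Suc n) k)
      = (\<Sum>k = 0..Suc n. if k = 0 then 0 else ?step k) + (\<Sum>k = 0..Suc n. ?stay k)"
    by (simp add: sum.distrib)
  also have "(\<Sum>k = 0..Suc n. if k = 0 then 0 else ?step k) = (\<Sum>j = 0..n. ?up j)"
    by (subst sum.atLeast0_atMost_Suc_shift) simp
  also have "(\<Sum>k = 0..Suc n. ?stay k) = (\<Sum>j = 0..n. ?stay j)"
    by (simp add: E_eq_0)
  also have "(\<Sum>j = 0..n. ?up j) + (\<Sum>j = 0..n. ?stay j)
      = (\<Sum>j = 0..n. qnum q (a + b + real n) * E a b q n j)"
    by (simp add: sum.distrib[symmetric] weights distrib_right[symmetric])
  finally show ?thesis
    by (simp add: sum_distrib_left)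
qed

lemma E_row_sum:
  assumes "q \<noteq> 1"
  shows "(\<Sum>k = 0..n. E a b q n k) = (\<Prod>i<n. qnum q (a + b + real i))"
proof (induction n)
  case (Suc n)
  then show ?case
    by (simp only: E_row_sum_Suc[OF assms] prod.lessThan_Suc mult.commute)
qed simp

theorem corollary3p3:
  fixes a b q :: real and n :: nat
  assumes "0 < q" and "q \<noteq> 1" and "n \<ge> 1"
  shows "En a b q n 1 = (\<Prod>i = 0..n-1. qnum q (a + b + real i))"
proof -
  have "{0..n-1} = {..<n}"
    using \<open>n \<ge> 1\<close> by auto
  then show ?thesis
    by (simp add: En_def E_row_sum[OF \<open>q \<noteq> 1\<close>])
qed

end
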